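(* In a finite dynamic game as described in the context, if $K^i$ is unilaterally sufficient information for player $i$, then for every behavioral strategy profile $g^{-i}$ of the players other than $i$, $K^i$ is an information state under $g^{-i}$ for the payoffs of all players $\mathcal{I}$: there exist functions $P_t^{i,g^{-i}}:\mathcal{K}_t^i\times\mathcal{U}_t^i\to\Delta(\mathcal{K}_{t+1}^i)$ and $r_t^{j,g^{-i}}:\mathcal{K}_t^i\times\mathcal{U}_t^i\to[-1,1]$ ($j\in\mathcal{I}$), not depending on $g^i$, such that $\Pr^{g^i,g^{-i}}(k_{t+1}^i\mid h_t^i,u_t^i)=P_t^{i,g^{-i}}(k_{t+1}^i\mid k_t^i,u_t^i)$ for all $t<T$ and $\mathbb{E}^{g^i,g^{-i}}[R_t^j\mid h_t^i,u_t^i]=r_t^{j,g^{-i}}(k_t^i,u_t^i)$ for all $j\in\mathcal{I}$ and all $t$, for all behavioral strategies $g^i$ and all $(h_t^i,u_t^i)$ admissible under $(g^i,g^{-i})$.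
   Context: Game model: finite set of players $\mathcal{I}$, times $\mathcal{T}=\{1,\dots,T\}$. At time $t$ each player $i$ takes action $U_t^i\in\mathcal{U}_t^i$, obtains reward $R_t^i\in[-1,1]$ and learns new information $Z_t^i\in\mathcal{Z}_t^i$. There is a state $X_t\in\mathcal{X}_t$ with $(X_{t+1},Z_t,R_t)=f_t(X_t,U_t,W_t)$ for fixed functions $f_t$. Primitive random variables $(X_1,H_1)$ and $W_1,\dots,W_T$ are mutually independent with commonly known distributions. All sets are finite. Perfect recall: $H_t^i=(H_1^i,Z_{1:t-1}^i)\in\mathcal{H}_t^i$, and $U_t^i$ is a component of $Z_t^i$. Behavioral strategy $g_t^i:\mathcal{H}_t^i\to\Delta(\mathcal{U}_t^i)$. A realization is admissible under a (partial) profile if it has positive probability under some completion of it. Compression: $K_1^i=\iota_1^i(H_1^i)$, $K_t^i=\iota_t^i(K_{t-1}^i,Z_{t-1}^i)$ for fixed maps, finite value sets $\mathcal{K}_t^i$; $k_t^i$ is the compression of $h_t^i$. Unilaterally sufficient information (USI): $K^i$ is USI for player $i$ if there exist $F_t^{i,g^i}:\mathcal{K}_t^i\to\Delta(\mathcal{H}_t^i)$ depending only on $g^i$ and $\Phi_t^{i,g^{-i}}:\mathcal{K}_t^i\to\Delta(\mathcal{X}_t\times\mathcal{H}_t^{-i})$ depending only on $g^{-i}$ with $\Pr^g(x_t,h_t\mid k_t^i)=F_t^{i,g^i}(h_t^i\mid k_t^i)\Phi_t^{i,g^{-i}}(x_t,h_t^{-i}\mid k_t^i)$ for all behavioral profiles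 $g$, all $t$, all $k_t^i$ admissible under $g$ (with $x_t,h_t^i,h_t^{-i}$ ranging independently; the left side is $0$ if they disagree on shared components). *)

theory Defs
  imports "HOL-Probability.Probability"
begin

text \<open>Finite dynamic game. Times are 1..horizon. Each player i has private initial
information H_1^i of type 'h; the history of player i at time t is
(H_1^i, [Z_1^i, ..., Z_{t-1}^i]).\<close>

record ('p, 'x, 'h, 'w, 'u, 'z) game =
  horizon :: nat
  init    :: "('x \<times> ('p \<Rightarrow> 'h)) pmf"
  noise   :: "nat \<Rightarrow> 'w pmf"
  dyn     :: "nat \<Rightarrow> 'x \<Rightarrow> ('p \<Rightarrow> 'u) \<Rightarrow> 'w \<Rightarrow> 'x \<times> ('p \<Rightarrow> 'z) \<times> ('p \<Rightarrow> real)"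
                                                  \<comment> \<open>(X_{t+1}, Z_t, R_t) = f_t(X_t,U_t,W_t)\<close>
  acts    :: "'p \<Rightarrow> nat \<Rightarrow> 'u set"
  act_of  :: "'p \<Rightarrow> nat \<Rightarrow> 'z \<Rightarrow> 'u"           \<comment> \<open>the U_t^i component of Z_t^i\<close>

type_synonym ('h, 'z) hist = "'h \<times> 'z list"

type_synonym ('p, 'h, 'z, 'u) profile = "'p \<Rightarrow> nat \<Rightarrow> ('h, 'z) hist \<Rightarrow> 'u pmf"

definition valid_strat ::
  "('p, 'x, 'h, 'w, 'u, 'z) game \<Rightarrow> 'p \<Rightarrow> (nat \<Rightarrow> ('h, 'z) hist \<Rightarrow> 'u pmf) \<Rightarrow> bool" where
  "valid_strat G i gi \<longleftrightarrow> (\<forall>t\<in>{1..horizon G}. \<forall>h. set_pmf (gi t h) \<subseteq> acts G i t)"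

definition init_state :: "('p, 'x, 'h, 'w, 'u, 'z) game \<Rightarrow> ('x \<times> ('p \<Rightarrow> ('h, 'z) hist)) pmf" where
  "init_state G = map_pmf (\<lambda>(x, h1). (x, \<lambda>i. (h1 i, []))) (init G)"

definition joint_actions ::
  "('p, 'h, 'z, 'u) profile \<Rightarrow> nat \<Rightarrow> ('p \<Rightarrow> ('h, 'z) hist) \<Rightarrow> ('p \<Rightarrow> 'u) pmf" where
  "joint_actions g t H = Pi_pmf UNIV undefined (\<lambda>i. g i t (H i))"

definition stage_of ::
  "('p, 'x, 'h, 'w, 'u, 'z) game \<Rightarrow> ('p, 'h, 'z, 'u) profile \<Rightarrow> nat \<Rightarrow>
   ('x \<times> ('p \<Rightarrow> ('h, 'z) hist)) pmf \<Rightarrow>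
   (('x \<times> ('p \<Rightarrow> ('h, 'z) hist)) \<times> ('p \<Rightarrow> 'u) \<times> 'w) pmf" where
  "stage_of G g t D =
     bind_pmf D (\<lambda>s. bind_pmf (joint_actions g t (snd s))
       (\<lambda>u. bind_pmf (noise G t) (\<lambda>w. return_pmf (s, u, w))))"

definition next_state ::
  "('p, 'x, 'h, 'w, 'u, 'z) game \<Rightarrow> nat \<Rightarrow>
   (('x \<times> ('p \<Rightarrow> ('h, 'z) hist)) \<times> ('p \<Rightarrow> 'u) \<times> 'w) \<Rightarrow> 'x \<times> ('p \<Rightarrow> ('h, 'z) hist)" where
  "next_state G t \<omega> = (case \<omega> of ((x, H), u, w) \<Rightarrow>
     (case dyn G t x u w of (x', z, r) \<Rightarrow> (x', \<lambda>i. (fst (H i), snd (H i) @ [z i]))))"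

text \<open>Law of (X_t, H_t) under profile g (meaningful for t \<ge> 1).\<close>
primrec state_dist ::
  "('p, 'x, 'h, 'w, 'u, 'z) game \<Rightarrow> ('p, 'h, 'z, 'u) profile \<Rightarrow> nat \<Rightarrow>
   ('x \<times> ('p \<Rightarrow> ('h, 'z) hist)) pmf" where
  "state_dist G g 0 = init_state G"
| "state_dist G g (Suc n) =
     (if n = 0 then init_state G else map_pmf (next_state G n) (stage_of G g n (state_dist G g n)))"

definition stage_dist ::
  "('p, 'x, 'h, 'w, 'u, 'z) game \<Rightarrow> ('p, 'h, 'z, 'u) profile \<Rightarrow> nat \<Rightarrow>
   (('x \<times> ('p \<Rightarrow> ('h, 'z) hist)) \<times> ('p \<Rightarrow> 'u) \<times> 'w) pmf" where
  "stage_dist G g t = stage_of G g t (state_dist G g t)"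

definition Zt :: "('p, 'x, 'h, 'w, 'u, 'z) game \<Rightarrow> nat \<Rightarrow>
   (('x \<times> ('p \<Rightarrow> ('h, 'z) hist)) \<times> ('p \<Rightarrow> 'u) \<times> 'w) \<Rightarrow> 'p \<Rightarrow> 'z" where
  "Zt G t \<omega> = (case \<omega> of ((x, H), u, w) \<Rightarrow> fst (snd (dyn G t x u w)))"

definition Rt :: "('p, 'x, 'h, 'w, 'u, 'z) game \<Rightarrow> nat \<Rightarrow>
   (('x \<times> ('p \<Rightarrow> ('h, 'z) hist)) \<times> ('p \<Rightarrow> 'u) \<times> 'w) \<Rightarrow> 'p \<Rightarrow> real" where
  "Rt G t \<omega> = (case \<omega> of ((x, H), u, w) \<Rightarrow> snd (snd (dyn G t x u w)))"

text \<open>Compression: K_1 = iota_1(H_1), K_t = iota_t(K_{t-1}, Z_{t-1}).\<close>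
fun kfold :: "('p \<Rightarrow> nat \<Rightarrow> 'k \<Rightarrow> 'z \<Rightarrow> 'k) \<Rightarrow> 'p \<Rightarrow> nat \<Rightarrow> 'k \<Rightarrow> 'z list \<Rightarrow> 'k" where
  "kfold io i t k [] = k"
| "kfold io i t k (z # zs) = kfold io i (Suc t) (io i t k z) zs"

definition compress ::
  "('p \<Rightarrow> 'h \<Rightarrow> 'k) \<Rightarrow> ('p \<Rightarrow> nat \<Rightarrow> 'k \<Rightarrow> 'z \<Rightarrow> 'k) \<Rightarrow> 'p \<Rightarrow> ('h, 'z) hist \<Rightarrow> 'k" where
  "compress io1 io i h = kfold io i 2 (io1 i (fst h)) (snd h)"

text \<open>Unilaterally sufficient information. h^{-i} is represented by the profile of
histories with the i-th entry blanked out (set to undefined).\<close>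
definition usi ::
  "('p, 'x, 'h, 'w, 'u, 'z) game \<Rightarrow> ('p \<Rightarrow> 'h \<Rightarrow> 'k) \<Rightarrow> ('p \<Rightarrow> nat \<Rightarrow> 'k \<Rightarrow> 'z \<Rightarrow> 'k) \<Rightarrow> 'p \<Rightarrow> bool" where
  "usi G io1 io i \<longleftrightarrow>
    (\<exists>(F :: (nat \<Rightarrow> ('h, 'z) hist \<Rightarrow> 'u pmf) \<Rightarrow> nat \<Rightarrow> 'k \<Rightarrow> ('h, 'z) hist pmf)
      (\<Phi> :: ('p, 'h, 'z, 'u) profile \<Rightarrow> nat \<Rightarrow> 'k \<Rightarrow> ('x \<times> ('p \<Rightarrow> ('h, 'z) hist)) pmf).
      \<forall>g. (\<forall>j. valid_strat G j (g j)) \<longrightarrow>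
        (\<forall>t\<in>{1..horizon G}. \<forall>k.
           let D = state_dist G g t; A = {s. compress io1 io i (snd s i) = k} in
           measure_pmf.prob D A > 0 \<longrightarrow>
           (\<forall>x H. pmf (cond_pmf D A) (x, H)
                  = pmf (F (g i) t k) (H i) * pmf (\<Phi> (g(i := undefined)) t k) (x, H(i := undefined)))))"

text \<open>K^i is an information state under g^{-i} for the payoffs of all players.
The profile gmi carries g^{-i} (its i-th entry is irrelevant: it is overwritten by g^i).\<close>
definition info_state ::
  "('p, 'x, 'h, 'w, 'u, 'z) game \<Rightarrow> ('p \<Rightarrow> 'h \<Rightarrow> 'k) \<Rightarrow> ('p \<Rightarrow> nat \<Rightarrow> 'k \<Rightarrow> 'z \<Rightarrow> 'k) \<Rightarrow> 'p \<Rightarrow>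
   ('p, 'h, 'z, 'u) profile \<Rightarrow> bool" where
  "info_state G io1 io i gmi \<longleftrightarrow>
    (\<exists>(P :: nat \<Rightarrow> 'k \<Rightarrow> 'u \<Rightarrow> 'k pmf) (r :: 'p \<Rightarrow> nat \<Rightarrow> 'k \<Rightarrow> 'u \<Rightarrow> real).
      (\<forall>j t k u. \<bar>r j t k u\<bar> \<le> 1) \<and>
      (\<forall>gi. valid_strat G i gi \<longrightarrow>
        (\<forall>t\<in>{1..horizon G}. \<forall>h u.
           let D = stage_dist G (gmi(i := gi)) t;
               A = {\<omega>. snd (fst \<omega>) i = h \<and> fst (snd \<omega>) i = u};
               k = compress io1 io i h in
           measure_pmf.prob D A > 0 \<longrightarrow>
           ((t < horizon G \<longrightarrow>
               (\<forall>k'. measure_pmf.prob (cond_pmf D A)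
                        {\<omega>. compress io1 io i (fst h, snd h @ [Zt G t \<omega> i]) = k'}
                     = pmf (P t k u) k')) \<and>
            (\<forall>j. measure_pmf.expectation (cond_pmf D A) (\<lambda>\<omega>. Rt G t \<omega> j) = r j t k u)))))"

end

theory Submission
  imports Defs
begin

text \<open>On the event {H_t^i = h, U_t^i = u}, the USI factorisation makes the density
of the stage outcome ((X_t, H_t), U_t, W_t) a constant multiple of the density of the stage
started from \<open>\<Phi>\<close>(k), k = compress h, in which player i plays u. The constant collects all the
dependence on g^i (the factor F and the probability of u), so it cancels on conditioning: with
h^i forgotten, the conditional law depends only on k, u and g^{-i}. Both K_{t+1}^i =
iota_{t+1}(k, Z_t^i) and R_t^j are functions of this law.\<close>

lemma kfold_snoc: "kfold io i t k (zs @ [z]) = io i (t + length zs) (kfold io i t k zs) z"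
  by (induction zs arbitrary: t k) auto

lemma compress_snoc:
  "compress io1 io i (a, zs @ [z]) = io i (Suc (Suc (length zs))) (compress io1 io i (a, zs)) z"
  by (simp add: compress_def kfold_snoc)

lemma abs_expectation_pmf_le:
  fixes f :: "'a \<Rightarrow> real"
  assumes "\<And>x. \<bar>f x\<bar> \<le> c"
  shows "\<bar>measure_pmf.expectation M f\<bar> \<le> c"
proof -
  have int: "integrable (measure_pmf M) f"
    by (rule measure_pmf.integrable_const_bound[where B = c]) (use assms in auto)
  have bounds: "-c \<le> f x" "f x \<le> c" for x
    using assms[of x] by (auto simp: abs_le_iff)
  have "-c \<le> measure_pmf.expectation M f"
    by (rule measure_pmf.integral_ge_const[OF int]) (simp add: bounds)
  moreover have "measure_pmf.expectation M f \<le> c"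
    by (rule measure_pmf.integral_le_const[OF int]) (simp add: bounds)
  ultimately show ?thesis by simp
qed

lemma map_pmf_cond_pmf_bij_betw:
  fixes D :: "'a pmf" and E :: "'b pmf"
  assumes bij: "bij_betw \<tau> A B"
    and proportional: "\<And>\<omega>. \<omega> \<in> A \<Longrightarrow> pmf D \<omega> = c * pmf E (\<tau> \<omega>)"
    and pos: "measure_pmf.prob D A > 0"
  shows "map_pmf \<tau> (cond_pmf D A) = cond_pmf E B"
proof -
  have "measure_pmf.prob D A = infsetsum (\<lambda>\<omega>. c * pmf E (\<tau> \<omega>)) A"
    unfolding measure_pmf_conv_infsetsum by (rule infsetsum_cong) (simp_all add: proportional)
  also have "\<dots> = c * infsetsum (\<lambda>\<omega>. pmf E (\<tau> \<omega>)) A"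
    using abs_summable_on_reindex_bij_betw[OF bij, of "pmf E"] pmf_abs_summable
    by (intro infsetsum_cmult_right) blast
  also have "infsetsum (\<lambda>\<omega>. pmf E (\<tau> \<omega>)) A = measure_pmf.prob E B"
    unfolding measure_pmf_conv_infsetsum by (rule infsetsum_reindex_bij_betw[OF bij])
  finally have PA: "measure_pmf.prob D A = c * measure_pmf.prob E B" .
  have "c > 0" and "measure_pmf.prob E B > 0"
    using pos PA measure_nonneg[of E B] by (auto simp: zero_less_mult_iff)
  then have neA: "set_pmf D \<inter> A \<noteq> {}" and neB: "set_pmf E \<inter> B \<noteq> {}"
    using pos by (simp_all add: measure_pmf_zero_iff[symmetric])
  show ?thesis
  proof (rule pmf_eqI)
    fix b
    have "\<tau> -` {b} \<inter> set_pmf (cond_pmf D A) = (\<tau> -` {b} \<inter> A) \<inter> set_pmf (cond_pmf D A)"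
      by (auto simp: set_cond_pmf[OF neA])
    then have "pmf (map_pmf \<tau> (cond_pmf D A)) b = measure_pmf.prob (cond_pmf D A) (\<tau> -` {b} \<inter> A)"
      by (metis pmf_map measure_Int_set_pmf)
    also have "\<dots> = pmf (cond_pmf E B) b"
    proof (cases "b \<in> B")
      case True
      then obtain a where a: "a \<in> A" "\<tau> a = b" using bij by (auto simp: bij_betw_def)
      then have "\<tau> -` {b} \<inter> A = {a}" using bij by (auto simp: bij_betw_def inj_on_def)
      then show ?thesis
        using a True \<open>c > 0\<close> by (simp add: measure_pmf_single pmf_cond neA neB proportional PA)
    next
      case False
      then have "\<tau> -` {b} \<inter> A = {}" using bij by (auto simp: bij_betw_def)
      then show ?thesis using False by (simp add: pmf_cond[OF neB])
    qed
    finally show "pmf (map_pmf \<tau> (cond_pmf D A)) b = pmf (cond_pmf E B) b" .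
  qed
qed

lemma pmf_stage_of:
  "pmf (stage_of G g t S) (s, U, w)
    = pmf S s * pmf (joint_actions g t (snd s)) U * pmf (noise G t) w"
proof -
  have noise: "pmf (noise G t \<bind> (\<lambda>w'. return_pmf (s', U', w'))) (s, U, w)
      = (if s' = s \<and> U' = U then pmf (noise G t) w else 0)" for s' U'
    by (subst pmf_bind, subst integral_measure_pmf_real[where A = "{w}"])
      (auto simp: indicator_def)
  have actions: "pmf (joint_actions g t (snd s') \<bind>
        (\<lambda>U'. noise G t \<bind> (\<lambda>w'. return_pmf (s', U', w')))) (s, U, w)
      = (if s' = s then pmf (joint_actions g t (snd s)) U * pmf (noise G t) w else 0)" for s'
    by (subst pmf_bind, subst integral_measure_pmf_real[where A = "{U}"])
      (auto simp: noise split: if_splits)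
  show ?thesis unfolding stage_of_def
    by (subst pmf_bind, subst integral_measure_pmf_real[where A = "{s}"])
      (auto simp: actions split: if_splits)
qed

lemma pmf_joint_actions:
  "pmf (joint_actions g t H) (U :: 'p::finite \<Rightarrow> _) = (\<Prod>j\<in>UNIV. pmf (g j t (H j)) (U j))"
  by (simp add: joint_actions_def pmf_Pi)

lemma fst_in_set_pmf_stage_of: "\<omega> \<in> set_pmf (stage_of G g t S) \<Longrightarrow> fst \<omega> \<in> set_pmf S"
  by (auto simp: stage_of_def)

lemma length_hist_state_dist:
  "s \<in> set_pmf (state_dist G g t) \<Longrightarrow> length (snd (snd s j)) = t - 1"
proof (induction t arbitrary: s)
  case 0
  then show ?case by (auto simp: init_state_def)
next
  case (Suc n)
  show ?case
  proof (cases "n = 0")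
    case True
    with Suc show ?thesis by (auto simp: init_state_def)
  next
    case False
    with Suc.prems obtain x H U w where
      stage: "((x, H), U, w) \<in> set_pmf (stage_of G g n (state_dist G g n))"
      and s: "s = next_state G n ((x, H), U, w)"
      by auto
    from Suc.IH[OF fst_in_set_pmf_stage_of[OF stage]] have "length (snd (H j)) = n - 1"
      by simp
    with s False show ?thesis by (auto simp: next_state_def split: prod.splits)
  qed
qed

abbreviation obs_event :: "'p \<Rightarrow> 'a \<Rightarrow> 'u \<Rightarrow> (('x \<times> ('p \<Rightarrow> 'a)) \<times> ('p \<Rightarrow> 'u) \<times> 'w) set" where
  "obs_event i h u \<equiv> {\<omega>. snd (fst \<omega>) i = h \<and> fst (snd \<omega>) i = u}"

lemma hist_in_set_pmf_if_obs_event_pos: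
  assumes "measure_pmf.prob (stage_of G g t S) (obs_event i h u) > 0"
  obtains s where "s \<in> set_pmf S" "snd s i = h"
proof -
  from assms have "set_pmf (stage_of G g t S) \<inter> obs_event i h u \<noteq> {}"
    by (simp add: measure_pmf_zero_iff[symmetric])
  then obtain \<omega> where "\<omega> \<in> set_pmf (stage_of G g t S)" "\<omega> \<in> obs_event i h u"
    by blast
  then show ?thesis using that fst_in_set_pmf_stage_of by blast
qed

lemma length_hist_if_obs_event_pos:
  "measure_pmf.prob (stage_dist G g t) (obs_event i h u) > 0 \<Longrightarrow> length (snd h) = t - 1"
  unfolding stage_dist_def
  by (erule hist_in_set_pmf_if_obs_event_pos) (auto dest: length_hist_state_dist[where j = i])

text \<open>Forgets h^i, in the encoding of h^{-i} used by \<open>usi\<close>.\<close>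
definition blank_hist :: "'p \<Rightarrow> ('x \<times> ('p \<Rightarrow> 'a)) \<times> 'b \<Rightarrow> ('x \<times> ('p \<Rightarrow> 'a)) \<times> 'b" where
  "blank_hist i \<omega> = ((fst (fst \<omega>), (snd (fst \<omega>))(i := undefined)), snd \<omega>)"

lemma cond_stage_of_factorized:
  fixes S :: "('x \<times> ('p::finite \<Rightarrow> ('h, 'z) hist)) pmf"
  assumes factorized:
      "\<And>x H. pmf (cond_pmf S K) (x, H) = pmf F (H i) * pmf \<Phi> (x, H(i := undefined))"
    and hist_in_K: "\<And>s. snd s i = h \<Longrightarrow> s \<in> K"
    and pos: "measure_pmf.prob (stage_of G g t S) (obs_event i h u) > 0"
  shows "map_pmf (blank_hist i) (cond_pmf (stage_of G g t S) (obs_event i h u))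
    = cond_pmf (stage_of G (g(i := \<lambda>_ _. return_pmf u)) t \<Phi>) (obs_event i undefined u)"
proof -
  obtain s0 where "s0 \<in> set_pmf S" "s0 \<in> K"
    using hist_in_set_pmf_if_obs_event_pos[OF pos] hist_in_K by metis
  then have neK: "set_pmf S \<inter> K \<noteq> {}" and posK: "measure_pmf.prob S K > 0"
    by (auto intro: measure_pmf_posI)
  define c where "c = measure_pmf.prob S K * pmf F h * pmf (g i t h) u"
  have "pmf (stage_of G g t S) \<omega>
      = c * pmf (stage_of G (g(i := \<lambda>_ _. return_pmf u)) t \<Phi>) (blank_hist i \<omega>)"
    if "\<omega> \<in> obs_event i h u" for \<omega>
  proof -
    obtain x H U w where \<omega>: "\<omega> = ((x, H), U, w)" by (metis prod.collapse)
    have Hi: "H i = h" and Ui: "U i = u" using that \<omega> by auto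
    have "pmf S (x, H) = measure_pmf.prob S K * pmf (cond_pmf S K) (x, H)"
      using hist_in_K[of "(x, H)"] Hi posK by (simp add: pmf_cond[OF neK])
    then have state: "pmf S (x, H)
        = measure_pmf.prob S K * pmf F h * pmf \<Phi> (x, H(i := undefined))"
      by (simp add: factorized Hi)
    have actions: "pmf (joint_actions g t H) U
        = pmf (g i t h) u * (\<Prod>j\<in>UNIV - {i}. pmf (g j t (H j)) (U j))"
      by (simp add: pmf_joint_actions prod.remove[of _ i] Hi Ui)
    have actions_u: "pmf (joint_actions (g(i := \<lambda>_ _. return_pmf u)) t (H(i := undefined))) U
        = (\<Prod>j\<in>UNIV - {i}. pmf (g j t (H j)) (U j))"
      by (auto simp: pmf_joint_actions prod.remove[of _ i] Ui intro!: prod.cong)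
    show ?thesis
      by (simp add: \<omega> blank_hist_def pmf_stage_of state actions actions_u c_def)
  qed
  moreover have "bij_betw (blank_hist i) (obs_event i h u) (obs_event i undefined u)"
    by (rule bij_betwI[where g = "\<lambda>\<omega>. ((fst (fst \<omega>), (snd (fst \<omega>))(i := h)), snd \<omega>)"])
      (auto simp: blank_hist_def)
  ultimately show ?thesis
    using map_pmf_cond_pmf_bij_betw pos by blast
qed

lemma info_state_if_blanked_cond_law:
  fixes G :: "('p::finite, 'x, 'h, 'w, 'u, 'z) game"
  assumes rewards_bounded:
      "\<forall>t\<in>{1..horizon G}. \<forall>x u w j. \<bar>snd (snd (dyn G t x u w)) j\<bar> \<le> 1"
    and law: "\<And>gi t h u. valid_strat G i gi \<Longrightarrow> t \<in> {1..horizon G} \<Longrightarrow>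
      measure_pmf.prob (stage_dist G (gmi(i := gi)) t) (obs_event i h u) > 0 \<Longrightarrow>
      map_pmf (blank_hist i) (cond_pmf (stage_dist G (gmi(i := gi)) t) (obs_event i h u))
        = Q t (compress io1 io i h) u"
  shows "info_state G io1 io i gmi"
proof -
  define P where "P t k u = map_pmf (\<lambda>\<omega>. io i (Suc t) k (Zt G t \<omega> i)) (Q t k u)" for t k u
  define r where "r j t k u = (if t \<in> {1..horizon G}
    then measure_pmf.expectation (Q t k u) (\<lambda>\<omega>. Rt G t \<omega> j) else 0)" for j t k u
  have Rt_bounded: "t \<in> {1..horizon G} \<Longrightarrow> \<bar>Rt G t \<omega> j\<bar> \<le> 1" for t \<omega> j
    using rewards_bounded by (auto simp: Rt_def split: prod.splits)
  have Zt_blank_hist: "Zt G t (blank_hist i \<omega>) = Zt G t \<omega>"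
    and Rt_blank_hist: "Rt G t (blank_hist i \<omega>) = Rt G t \<omega>" for t \<omega>
    by (simp_all add: blank_hist_def Zt_def Rt_def split_beta)
  show ?thesis
    unfolding info_state_def Let_def
  proof (intro exI[of _ P] exI[of _ r] conjI allI impI ballI)
    fix j t k u
    show "\<bar>r j t k u\<bar> \<le> 1"
      by (simp add: r_def Rt_bounded abs_expectation_pmf_le)
  next
    fix gi t h u k'
    assume gi: "valid_strat G i gi" and t: "t \<in> {1..horizon G}"
      and pos: "measure_pmf.prob (stage_dist G (gmi(i := gi)) t) (obs_event i h u) > 0"
    define M where "M = cond_pmf (stage_dist G (gmi(i := gi)) t) (obs_event i h u)"
    have len: "Suc (Suc (length (snd h))) = Suc t"
      using length_hist_if_obs_event_pos[OF pos] t by simp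
    have "pmf (P t (compress io1 io i h) u) k'
        = measure_pmf.prob M {\<omega>. io i (Suc t) (compress io1 io i h) (Zt G t \<omega> i) = k'}"
      by (simp add: P_def pmf_map law[OF gi t pos, folded M_def, symmetric] Zt_blank_hist
          vimage_def)
    also have "\<dots> = measure_pmf.prob M {\<omega>. compress io1 io i (fst h, snd h @ [Zt G t \<omega> i]) = k'}"
      using len by (cases h) (simp add: compress_snoc)
    finally show "measure_pmf.prob M {\<omega>. compress io1 io i (fst h, snd h @ [Zt G t \<omega> i]) = k'}
        = pmf (P t (compress io1 io i h) u) k'"
      by simp
  next
    fix gi t h u j
    assume gi: "valid_strat G i gi" and t: "t \<in> {1..horizon G}"
      and pos: "measure_pmf.prob (stage_dist G (gmi(i := gi)) t) (obs_event i h u) > 0"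
    show "measure_pmf.expectation (cond_pmf (stage_dist G (gmi(i := gi)) t) (obs_event i h u))
        (\<lambda>\<omega>. Rt G t \<omega> j) = r j t (compress io1 io i h) u"
      using t by (simp add: r_def law[OF gi t pos, symmetric] Rt_blank_hist)
  qed
qed

theorem lemma4:
  fixes G :: "('p::finite, 'x::finite, 'h::finite, 'w::finite, 'u::finite, 'z::finite) game"
    and io1 :: "'p \<Rightarrow> 'h \<Rightarrow> 'k::finite"
    and io :: "'p \<Rightarrow> nat \<Rightarrow> 'k \<Rightarrow> 'z \<Rightarrow> 'k"
    and i :: 'p
  assumes rewards_bounded:
      "\<forall>t\<in>{1..horizon G}. \<forall>x u w j. \<bar>snd (snd (dyn G t x u w)) j\<bar> \<le> 1"
    and action_in_info:
      "\<forall>t\<in>{1..horizon G}. \<forall>x u w j. act_of G j t (fst (snd (dyn G t x u w)) j) = u j"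
    and USI: "usi G io1 io i"
  shows "\<forall>gmi :: ('p, 'h, 'z, 'u) profile.
           (\<forall>j. j \<noteq> i \<longrightarrow> valid_strat G j (gmi j)) \<longrightarrow> info_state G io1 io i gmi"
proof (intro allI impI)
  fix gmi :: "('p, 'h, 'z, 'u) profile"
  assume others_valid: "\<forall>j. j \<noteq> i \<longrightarrow> valid_strat G j (gmi j)"
  from USI obtain F \<Phi> where factorized: "\<forall>g. (\<forall>j. valid_strat G j (g j)) \<longrightarrow>
      (\<forall>t\<in>{1..horizon G}. \<forall>k.
        let D = state_dist G g t; A = {s. compress io1 io i (snd s i) = k} in
        measure_pmf.prob D A > 0 \<longrightarrow>
        (\<forall>x H. pmf (cond_pmf D A) (x, H)
          = pmf (F (g i) t k) (H i) * pmf (\<Phi> (g(i := undefined)) t k) (x, H(i := undefined))))"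
    unfolding usi_def by blast
  define Q where "Q t k u = cond_pmf (stage_of G (gmi(i := \<lambda>_ _. return_pmf u)) t
    (\<Phi> (gmi(i := undefined)) t k)) (obs_event i undefined u)" for t k u
  show "info_state G io1 io i gmi"
  proof (rule info_state_if_blanked_cond_law[OF rewards_bounded, where Q = Q])
    fix gi t h u
    assume gi: "valid_strat G i gi" and t: "t \<in> {1..horizon G}"
      and pos: "measure_pmf.prob (stage_dist G (gmi(i := gi)) t) (obs_event i h u) > 0"
    let ?S = "state_dist G (gmi(i := gi)) t"
    let ?K = "{s. compress io1 io i (snd s i) = compress io1 io i h}"
    have "measure_pmf.prob ?S ?K > 0"
      using pos unfolding stage_dist_def
      by (elim hist_in_set_pmf_if_obs_event_pos) (auto intro: measure_pmf_posI)
    then have "pmf (cond_pmf ?S ?K) (x, H) = pmf (F gi t (compress io1 io i h)) (H i)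
        * pmf (\<Phi> (gmi(i := undefined)) t (compress io1 io i h)) (x, H(i := undefined))" for x H
      using factorized[rule_format, of "gmi(i := gi)" t "compress io1 io i h"] others_valid gi t
      by (auto simp: Let_def)
    from cond_stage_of_factorized[OF this _ pos[unfolded stage_dist_def]]
    show "map_pmf (blank_hist i) (cond_pmf (stage_dist G (gmi(i := gi)) t) (obs_event i h u))
        = Q t (compress io1 io i h) u"
      by (simp add: Q_def stage_dist_def)
  qed
qed

end
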